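(* Let $G_n$ and $T$ be as in the context, and let $k\geq n+2$. Let $W=v_0e_0v_1e_1\cdots e_{k-1}v_k$ be a walk in $T$ (so each $e_i$ is an arc of $T$ from $v_i$ to $v_{i+1}$). Then $l(e_0)\leq l(e_{n+1})$, where $l(e)$ denotes the label of the arc $e$.
   Context: Let $A$ be a finite alphabet with a linear order $<$, extended to the lexicographic order on words. Let $\mathcal{F}$ be a set of words over $A$ (forbidden words). A word $w$ is in the language if the bi-infinite periodic sequence $\cdots www\cdots$ contains no element of $\mathcal{F}$ as a factor; $W_k$ denotes the set of words of length $k$ in the language. Fix $n\geq 1$ and consider the digraph with vertex set $A^n$ and arcs $(as,sb)$ for $a,b\in A$, $s\in A^{n-1}$, $asb\in W_{n+1}$, the label of $(as,sb)$ being $b$. The de Bruijn graph of span $n$, $G_n$, is a strongly connected component of maximum size of this digraph; vertices are identified with their words. Let $m$ be the vertex of $G_n$ whose word is lexicographically largest. For each vertex $v$, let $e(v)$ be the arc of $G_n$ with tail $v$ having maximum label. $T$ is the spanning subgraph of $G_n$ with arc set $\{e(v): v\in V(G_n), v\neq m\}$. *)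

theory Defs
  imports Main
begin

(* u is a factor of the bi-infinite periodic sequence ...www... (w nonempty) *)
definition periodic_factor :: "'a list \<Rightarrow> 'a list \<Rightarrow> bool" where
  "periodic_factor w u \<longleftrightarrow>
     (\<exists>i::nat. \<forall>j<length u. u ! j = w ! ((i + j) mod length w))"

definition in_lang :: "'a list set \<Rightarrow> 'a list \<Rightarrow> bool" where
  "in_lang F w \<longleftrightarrow> w \<noteq> [] \<and> (\<forall>u\<in>F. \<not> periodic_factor w u)"

definition Wk :: "'a set \<Rightarrow> 'a list set \<Rightarrow> nat \<Rightarrow> 'a list set" where
  "Wk A F k = {w. length w = k \<and> set w \<subseteq> A \<and> in_lang F w}"

definition dB_arc :: "'a set \<Rightarrow> 'a list set \<Rightarrow> nat \<Rightarrow> 'a list \<Rightarrow> 'a list \<Rightarrow> bool" where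
  "dB_arc A F n u v \<longleftrightarrow>
     (\<exists>a b s. length s = n - 1 \<and> u = a # s \<and> v = s @ [b] \<and> a # s @ [b] \<in> Wk A F (n + 1))"

definition is_scc :: "'a set \<Rightarrow> 'a list set \<Rightarrow> nat \<Rightarrow> 'a list set \<Rightarrow> bool" where
  "is_scc A F n C \<longleftrightarrow> C \<noteq> {} \<and> (\<forall>x\<in>C. length x = n \<and> set x \<subseteq> A) \<and>
     (\<forall>x\<in>C. \<forall>y\<in>C. (dB_arc A F n)\<^sup>*\<^sup>* x y) \<and>
     (\<forall>x\<in>C. \<forall>y. (dB_arc A F n)\<^sup>*\<^sup>* x y \<and> (dB_arc A F n)\<^sup>*\<^sup>* y x \<longrightarrow> y \<in> C)"

(* C is a strongly connected component of maximum size: the vertex set of G_n *)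
definition is_max_scc :: "'a set \<Rightarrow> 'a list set \<Rightarrow> nat \<Rightarrow> 'a list set \<Rightarrow> bool" where
  "is_max_scc A F n C \<longleftrightarrow> is_scc A F n C \<and> (\<forall>C'. is_scc A F n C' \<longrightarrow> card C' \<le> card C)"

definition G_arc :: "'a set \<Rightarrow> 'a list set \<Rightarrow> nat \<Rightarrow> 'a list set \<Rightarrow> 'a list \<Rightarrow> 'a list \<Rightarrow> bool" where
  "G_arc A F n C u v \<longleftrightarrow> u \<in> C \<and> v \<in> C \<and> dB_arc A F n u v"

definition label :: "'a list \<Rightarrow> 'a list \<Rightarrow> 'a" where
  "label u v = last v"

definition is_lex_max :: "('a::linorder) list set \<Rightarrow> 'a list \<Rightarrow> bool" where
  "is_lex_max C m \<longleftrightarrow> m \<in> C \<and> (\<forall>v\<in>C. lexordp_eq v m)"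

definition T_arc :: "('a::linorder) set \<Rightarrow> 'a list set \<Rightarrow> nat \<Rightarrow> 'a list set \<Rightarrow> 'a list \<Rightarrow> 'a list \<Rightarrow> 'a list \<Rightarrow> bool" where
  "T_arc A F n C m u v \<longleftrightarrow> u \<noteq> m \<and> G_arc A F n C u v \<and>
     (\<forall>w. G_arc A F n C u w \<longrightarrow> label u w \<le> label u v)"

end

theory Submission
  imports Defs
begin

text \<open>A walk of length \<open>n\<close> in the de Bruijn graph spells its labels as the vertex it
reaches, so \<open>l(e\<^sub>0)\<close> is the first letter of \<open>v\<^sub>n\<close>. The arc \<open>e\<^sub>n\<close> puts the word
\<open>v\<^sub>n l(e\<^sub>n)\<close> into the language; since the language consists of periodic words, it is
closed under rotation, and the rotation \<open>v\<^sub>n\<^sub>+\<^sub>1 l(e\<^sub>0)\<close> yields an arc from \<open>v\<^sub>n\<^sub>+\<^sub>1\<close>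
with label \<open>l(e\<^sub>0)\<close>. All rotations of one word form a closed walk, so this arc stays
inside the strongly connected component \<open>G\<^sub>n\<close>, and maximality of \<open>e(v\<^sub>n\<^sub>+\<^sub>1)\<close> gives
\<open>l(e\<^sub>0) \<le> l(e\<^sub>n\<^sub>+\<^sub>1)\<close>.\<close>

lemma periodic_factor_rotate1:
  assumes "w \<noteq> []" "periodic_factor (rotate1 w) u"
  shows "periodic_factor w u"
proof -
  obtain i where i: "\<forall>j<length u. u ! j = rotate1 w ! ((i + j) mod length w)"
    using assms(2) by (auto simp: periodic_factor_def)
  have "u ! j = w ! ((Suc i + j) mod length w)" if "j < length u" for j
    using i that assms(1) by (simp add: nth_rotate1 mod_Suc_eq)
  then show ?thesis unfolding periodic_factor_def by blast
qed

lemma rotate1_in_Wk: "w \<in> Wk A F L \<Longrightarrow> rotate1 w \<in> Wk A F L"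
  by (auto simp: Wk_def in_lang_def dest: periodic_factor_rotate1)

lemma rotate_in_Wk: "w \<in> Wk A F L \<Longrightarrow> rotate j w \<in> Wk A F L"
  by (induction j) (auto simp: rotate1_in_Wk)

lemma dB_arc_snoc:
  assumes "u @ [b] \<in> Wk A F (n + 1)" "n \<ge> 1"
  shows "dB_arc A F n u (tl u @ [b])"
proof -
  have "length u = n" using assms(1) by (simp add: Wk_def)
  with assms(2) obtain a s where "u = a # s" "length s = n - 1" by (cases u) auto
  with assms(1) show ?thesis unfolding dB_arc_def by auto
qed

lemma dB_arc_decompose:
  assumes "dB_arc A F n u v" "n \<ge> 1"
  shows "length u = n \<and> v = tl u @ [label u v] \<and> u @ [label u v] \<in> Wk A F (n + 1)"
  using assms unfolding dB_arc_def label_def by auto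

lemma dB_arc_take_rotate1:
  assumes "w \<in> Wk A F (n + 1)" "n \<ge> 1"
  shows "dB_arc A F n (take n w) (take n (rotate1 w))"
proof -
  obtain u b where w: "w = u @ [b]"
    using assms(1) by (cases w rule: rev_cases) (auto simp: Wk_def)
  have "length u = n" using assms(1) w by (simp add: Wk_def)
  then show ?thesis using dB_arc_snoc[OF assms(1)[unfolded w] assms(2)] w assms(2)
    by (cases u) auto
qed

lemma dB_rtranclp_take_rotate:
  assumes "w \<in> Wk A F (n + 1)" "n \<ge> 1"
  shows "(dB_arc A F n)\<^sup>*\<^sup>* (take n w) (take n (rotate j w))"
proof (induction j)
  case (Suc j)
  have "dB_arc A F n (take n (rotate j w)) (take n (rotate1 (rotate j w)))"
    using dB_arc_take_rotate1[OF rotate_in_Wk[OF assms(1)] assms(2)] .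
  with Suc show ?case by (simp add: rtranclp.rtrancl_into_rtrancl)
qed simp

lemma dB_arc_snoc_on_cycle:
  assumes "u @ [b] \<in> Wk A F (n + 1)" "n \<ge> 1"
  shows "(dB_arc A F n)\<^sup>*\<^sup>* (tl u @ [b]) u"
proof -
  let ?w = "rotate1 (u @ [b])"
  have "length u = n" using assms(1) by (simp add: Wk_def)
  with assms(2) have "take n ?w = tl u @ [b]" by (cases u) auto
  moreover have "rotate n ?w = rotate (n + 1) (u @ [b])"
    by (simp add: rotate_def funpow_swap1)
  with \<open>length u = n\<close> have "rotate n ?w = u @ [b]" by (simp del: rotate_Suc)
  ultimately show ?thesis
    using dB_rtranclp_take_rotate[OF rotate1_in_Wk[OF assms(1)] assms(2), of n]
      \<open>length u = n\<close> by simp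
qed

lemma T_arc_label_max:
  assumes "T_arc A F n C m u v" "is_scc A F n C"
    and "u @ [b] \<in> Wk A F (n + 1)" "n \<ge> 1"
  shows "b \<le> label u v"
proof -
  have "u \<in> C" using assms(1) by (simp add: T_arc_def G_arc_def)
  have arc: "dB_arc A F n u (tl u @ [b])" using dB_arc_snoc[OF assms(3,4)] .
  moreover have "tl u @ [b] \<in> C"
    using assms(2) \<open>u \<in> C\<close> arc dB_arc_snoc_on_cycle[OF assms(3,4)]
    unfolding is_scc_def by blast
  ultimately have "G_arc A F n C u (tl u @ [b])" using \<open>u \<in> C\<close> by (simp add: G_arc_def)
  then show ?thesis using assms(1) by (force simp: T_arc_def label_def)
qed

lemma dB_walk_drop_labels:
  assumes "\<forall>i<j. dB_arc A F n (vs i) (vs (Suc i))" "length (vs 0) = n" "j \<le> n" "n \<ge> 1"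
  shows "drop (n - j) (vs j) = map (\<lambda>i. label (vs i) (vs (Suc i))) [0..<j]"
  using assms(1,3)
proof (induction j)
  case 0
  then show ?case using assms(2) by simp
next
  case (Suc j)
  define l where "l = label (vs j) (vs (Suc j))"
  have "length (vs j) = n" "vs (Suc j) = tl (vs j) @ [l]"
    using dB_arc_decompose Suc.prems(1) assms(4) unfolding l_def by blast+
  then have "drop (n - Suc j) (vs (Suc j)) = drop (Suc (n - Suc j)) (vs j) @ [l]"
    using Suc.prems(2) by (simp add: drop_Suc)
  also have "Suc (n - Suc j) = n - j" using Suc.prems(2) by simp
  finally show ?case using Suc by (simp add: l_def)
qed

theorem lemma2:
  fixes A :: "'a::linorder set" and F :: "'a list set" and n k :: nat
    and C :: "'a list set" and m :: "'a list" and vs :: "nat \<Rightarrow> 'a list"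
  assumes "finite A"
    and "n \<ge> 1"
    and "is_max_scc A F n C"
    and "is_lex_max C m"
    and "k \<ge> n + 2"
    and "\<forall>i<k. T_arc A F n C m (vs i) (vs (Suc i))"
  shows "label (vs 0) (vs 1) \<le> label (vs (n + 1)) (vs (n + 2))"
proof -
  have arcs: "\<forall>i<n + 1. dB_arc A F n (vs i) (vs (Suc i))"
    using assms(5,6) by (auto simp: T_arc_def G_arc_def)
  define b where "b = label (vs n) (vs (n + 1))"
  have "dB_arc A F n (vs n) (vs (n + 1))" using arcs by simp
  then have vn: "length (vs n) = n" "vs (n + 1) = tl (vs n) @ [b]" "vs n @ [b] \<in> Wk A F (n + 1)"
    using dB_arc_decompose assms(2) unfolding b_def by blast+
  have "length (vs 0) = n" using dB_arc_decompose[OF arcs[rule_format, of 0] assms(2)] by simp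
  then have "drop 0 (vs n) = map (\<lambda>i. label (vs i) (vs (Suc i))) [0..<n]"
    using dB_walk_drop_labels[of n A F n vs] arcs assms(2) by auto
  then have "vs n = label (vs 0) (vs 1) # tl (vs n)"
    using assms(2) vn(1) by (cases "vs n") (auto simp: upt_conv_Cons)
  then have "vs (n + 1) @ [label (vs 0) (vs 1)] = rotate1 (vs n @ [b])"
    using vn(2) by (metis append_Cons rotate1.simps(2))
  then have "vs (n + 1) @ [label (vs 0) (vs 1)] \<in> Wk A F (n + 1)"
    using rotate1_in_Wk[OF vn(3)] by simp
  moreover have "T_arc A F n C m (vs (n + 1)) (vs (n + 2))" using assms(5,6) by simp
  ultimately show ?thesis
    using T_arc_label_max assms(2,3) unfolding is_max_scc_def by blast
qed

end
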